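(* For each nonnegative integer $n$, \[ \sum_{k=0}^{n} (-1)^k \overline{{n \brack k}}_{q,1} = \begin{cases} 0 &\text{if $n$ is odd,} \\ \sum_{j=-n/2}^{n/2} (-1)^j q^{j^2} &\text{if $n$ is even.} \end{cases} \]
   Context: An overpartition is a partition in which the last occurrence of each distinct part size may be overlined; its weight $|\lambda|$ is the sum of its parts. For integers $0\le k\le n$, $\overline{{n \brack k}}_{q,1}=\sum_{\lambda} q^{|\lambda|}$, the sum over all overpartitions $\lambda$ with largest part at most $n-k$ and at most $k$ parts (i.e. the generating function for overpartitions fitting inside an $(n-k)\times k$ rectangle). *)

theory Defs
  imports Main
begin

text \<open>An overpartition is encoded as a pair (xs, S): xs is the list of parts in
nonincreasing order (all parts positive), and S is the set of overlined part sizes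
(the last occurrence of each size in S is overlined), so S is a subset of set xs.\<close>

definition overpartitions_in_box :: "nat \<Rightarrow> nat \<Rightarrow> (nat list \<times> nat set) set" where
  "overpartitions_in_box a b =
     {(xs, S). sorted_wrt (\<ge>) xs \<and> (\<forall>x\<in>set xs. 0 < x \<and> x \<le> a) \<and>
               length xs \<le> b \<and> S \<subseteq> set xs}"

definition over_qbinom :: "nat \<Rightarrow> nat \<Rightarrow> 'a::comm_ring_1 \<Rightarrow> 'a" where
  "over_qbinom n k q = (\<Sum>(xs, S) \<in> overpartitions_in_box (n - k) k. q ^ sum_list xs)"

end

theory Submission
  imports Defs
begin

text \<open>Let P(a, b) be the generating function of overpartitions in an a-by-b box.
Removing the largest part gives P(a+1, b+1) = P(a, b+1) + q^(a+1) (P(a+1, b) + P(a, b)), and the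
conjugate recurrence, with q^(b+1) instead, follows from it algebraically. For the diagonal sums
A n = \<Sum>k. (-1)^k P(n-k, k) and B n = \<Sum>k. (-q)^k P(n-k, k) the two recurrences give
A (n+2) = B (n+1) - A (n+1) - q B n and B (n+2) = B (n+1) - q^(n+2) (A (n+1) + A n);
eliminating B yields A (n+4) = (1 - q^(n+3)) A (n+2) + q^(n+3) A n. As A 1 = A 3 = 0 the odd
terms vanish, and A (2m+2) - A (2m) = 2 (-1)^(m+1) q^((m+1)^2) telescopes to the theta series.\<close>

lemma overpartitions_in_box_0_left: "overpartitions_in_box 0 b = {([], {})}"
proof -
  have "xs = []" if "\<forall>x\<in>set xs. 0 < x \<and> x \<le> (0::nat)" for xs
    using that by (cases xs) auto
  then show ?thesis
    unfolding overpartitions_in_box_def by auto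
qed

lemma overpartitions_in_box_0_right: "overpartitions_in_box a 0 = {([], {})}"
  unfolding overpartitions_in_box_def by auto

lemma finite_overpartitions_in_box: "finite (overpartitions_in_box a b)"
proof (rule finite_subset)
  show "overpartitions_in_box a b \<subseteq> {xs. set xs \<subseteq> {1..a} \<and> length xs \<le> b} \<times> Pow {1..a}"
    unfolding overpartitions_in_box_def by (auto; fastforce)
  show "finite ({xs. set xs \<subseteq> {1..a} \<and> length xs \<le> b} \<times> Pow {1..a})"
    by (intro finite_cartesian_product finite_lists_length_le) auto
qed

text \<open>Removing the largest part a+1 keeps the set of overlined sizes, unless that part was the
only occurrence of a+1 and was overlined.\<close>

lemma overpartitions_in_box_Suc_Suc:
  "overpartitions_in_box (Suc a) (Suc b) =
     overpartitions_in_box a (Suc b)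
   \<union> (\<lambda>(ys, S). (Suc a # ys, S)) ` overpartitions_in_box (Suc a) b
   \<union> (\<lambda>(ys, S). (Suc a # ys, insert (Suc a) S)) ` overpartitions_in_box a b"
  (is "?B = ?L \<union> ?F \<union> ?G")
proof (intro equalityI subsetI)
  fix p assume "p \<in> ?B"
  then obtain xs S where p: "p = (xs, S)" and xs: "sorted_wrt (\<ge>) xs"
    "\<forall>x\<in>set xs. 0 < x \<and> x \<le> Suc a" "length xs \<le> Suc b" "S \<subseteq> set xs"
    unfolding overpartitions_in_box_def by auto
  consider "Suc a \<notin> set xs" | ys where "xs = Suc a # ys"
  proof (cases xs)
    case (Cons x ys)
    show thesis
    proof (cases "x = Suc a")
      case False
      then have "x \<le> a"
        using xs(2) Cons by auto
      moreover have "y \<le> x" if "y \<in> set xs" for y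
        using xs(1) that Cons by auto
      ultimately show thesis
        using that(1) by fastforce
    qed (use that(2) Cons in auto)
  qed (use that in auto)
  then show "p \<in> ?L \<union> ?F \<union> ?G"
  proof cases
    case 1
    then have "p \<in> ?L"
      using xs p unfolding overpartitions_in_box_def by (auto simp: le_Suc_eq)
    then show ?thesis by blast
  next
    case (2 ys)
    show ?thesis
    proof (cases "Suc a \<in> S \<and> Suc a \<notin> set ys")
      case True
      have "(ys, S - {Suc a}) \<in> overpartitions_in_box a b"
        using xs 2 True unfolding overpartitions_in_box_def by (auto simp: le_Suc_eq)
      moreover have "p = (Suc a # ys, insert (Suc a) (S - {Suc a}))"
        using p 2 True by auto
      ultimately show ?thesis by (intro UnI2 image_eqI[where x = "(ys, S - {Suc a})"]) simp_all
    next
      case False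
      then have "(ys, S) \<in> overpartitions_in_box (Suc a) b"
        using xs 2 unfolding overpartitions_in_box_def by auto
      then show ?thesis using p 2 by (intro UnI1 UnI2 image_eqI[where x = "(ys, S)"]) simp_all
    qed
  qed
next
  fix p assume "p \<in> ?L \<union> ?F \<union> ?G"
  moreover have "?L \<subseteq> ?B" "?F \<subseteq> ?B" "?G \<subseteq> ?B"
    unfolding overpartitions_in_box_def by (auto simp: le_Suc_eq)
  ultimately show "p \<in> ?B" by blast
qed

lemma Suc_notin_overpartitions_in_box:
  assumes "(xs, S) \<in> overpartitions_in_box a b"
  shows "Suc a \<notin> set xs" "Suc a \<notin> S"
proof -
  have "S \<subseteq> set xs" "\<forall>x\<in>set xs. x \<le> a"
    using assms unfolding overpartitions_in_box_def by auto
  then show "Suc a \<notin> set xs" "Suc a \<notin> S"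
    by (meson Suc_n_not_le_n subsetD)+
qed

lemma inj_on_cons_overlined_part:
  "inj_on (\<lambda>(ys, S). (Suc a # ys, insert (Suc a) S)) (overpartitions_in_box a b)"
proof (rule inj_onI)
  fix p p' assume p: "p \<in> overpartitions_in_box a b" and p': "p' \<in> overpartitions_in_box a b"
    and eq: "(\<lambda>(ys, S). (Suc a # ys, insert (Suc a) S)) p =
      (\<lambda>(ys, S). (Suc a # ys, insert (Suc a) S)) p'"
  obtain ys S ys' S' where ps: "p = (ys, S)" "p' = (ys', S')" by fastforce
  have "Suc a \<notin> S" "Suc a \<notin> S'"
    using p p' unfolding ps by (auto dest: Suc_notin_overpartitions_in_box(2))
  moreover have "ys = ys'" "insert (Suc a) S = insert (Suc a) S'"
    using eq unfolding ps by simp_all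
  ultimately show "p = p'"
    unfolding ps by (metis Diff_insert_absorb)
qed

definition overpartition_gf :: "'a::comm_ring_1 \<Rightarrow> nat \<Rightarrow> nat \<Rightarrow> 'a" where
  "overpartition_gf q a b = (\<Sum>(xs, S) \<in> overpartitions_in_box a b. q ^ sum_list xs)"

lemma overpartition_gf_0_left [simp]: "overpartition_gf q 0 b = 1"
  by (simp add: overpartition_gf_def overpartitions_in_box_0_left)

lemma overpartition_gf_0_right [simp]: "overpartition_gf q a 0 = 1"
  by (simp add: overpartition_gf_def overpartitions_in_box_0_right)

lemma overpartition_gf_Suc_Suc:
  "overpartition_gf q (Suc a) (Suc b) =
     overpartition_gf q a (Suc b) + q ^ Suc a * (overpartition_gf q (Suc a) b + overpartition_gf q a b)"
proof -
  let ?L = "overpartitions_in_box a (Suc b)"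
  let ?F = "(\<lambda>(ys, S). (Suc a # ys, S)) ` overpartitions_in_box (Suc a) b"
  let ?G = "(\<lambda>(ys, S). (Suc a # ys, insert (Suc a) S)) ` overpartitions_in_box a b"
  let ?w = "\<lambda>(xs, S). q ^ sum_list xs"
  have disj: "?L \<inter> (?F \<union> ?G) = {}" "?F \<inter> ?G = {}"
    unfolding overpartitions_in_box_def by (auto; fastforce)+
  have "sum ?w ?F = q ^ Suc a * overpartition_gf q (Suc a) b"
    by (subst sum.reindex)
      (auto simp: inj_on_def overpartition_gf_def sum_distrib_left power_add intro!: sum.cong)
  moreover have "sum ?w ?G = q ^ Suc a * overpartition_gf q a b"
    by (subst sum.reindex[OF inj_on_cons_overlined_part])
      (auto simp: overpartition_gf_def sum_distrib_left power_add intro!: sum.cong)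
  moreover have
    "overpartition_gf q (Suc a) (Suc b) = overpartition_gf q a (Suc b) + (sum ?w ?F + sum ?w ?G)"
    unfolding overpartition_gf_def overpartitions_in_box_Suc_Suc Un_assoc
    using disj finite_overpartitions_in_box by (simp add: sum.union_disjoint)
  ultimately show ?thesis by (simp add: distrib_left)
qed

lemma box_recursion_eq_0:
  fixes f :: "nat \<Rightarrow> nat \<Rightarrow> 'a::semiring_0"
  assumes "\<And>a. f a 0 = 0" and "\<And>b. f 0 b = 0"
    and "\<And>a b. f (Suc a) (Suc b) = f a (Suc b) + c a * (f (Suc a) b + f a b)"
  shows "f a b = 0"
proof (induction a arbitrary: b)
  case (Suc a)
  then show ?case
    by (induction b) (simp_all add: assms)
qed (simp add: assms)

lemma overpartition_gf_Suc_Suc_conjugate: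
  "overpartition_gf q (Suc a) (Suc b) =
     overpartition_gf q (Suc a) b + q ^ Suc b * (overpartition_gf q a (Suc b) + overpartition_gf q a b)"
proof -
  let ?P = "overpartition_gf q"
  \<comment> \<open>the defect of the conjugate recurrence satisfies the original one, with zero boundary values\<close>
  define D where
    "D a b = ?P (Suc a) (Suc b) - ?P (Suc a) b - q ^ Suc b * (?P a (Suc b) + ?P a b)" for a b
  have "D 0 0 = 0"
    by (simp add: D_def overpartition_gf_Suc_Suc)
  moreover have "D (Suc a) 0 = D a 0" "D 0 (Suc b) = q * D 0 b" for a b
    by (simp_all add: D_def overpartition_gf_Suc_Suc algebra_simps)
  ultimately have "D a 0 = 0" "D 0 b = 0" for a b
    by (induction a; induction b; simp)+
  moreover have "D (Suc a) (Suc b) = D a (Suc b) + q ^ Suc (Suc a) * (D (Suc a) b + D a b)" for a b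
    by (simp add: D_def overpartition_gf_Suc_Suc algebra_simps)
  ultimately have "D a b = 0"
    by (rule box_recursion_eq_0)
  then show ?thesis by (simp add: D_def algebra_simps)
qed

lemma sum_antidiagonal_Suc_first:
  fixes f :: "nat \<Rightarrow> nat \<Rightarrow> 'a::comm_monoid_add"
  shows "(\<Sum>k\<le>Suc n. f (Suc n - k) k) = f (Suc n) 0 + (\<Sum>k\<le>n. f (n - k) (Suc k))"
  unfolding sum.atMost_Suc_shift by simp

lemma sum_antidiagonal_Suc_last:
  fixes f :: "nat \<Rightarrow> nat \<Rightarrow> 'a::comm_monoid_add"
  shows "(\<Sum>k\<le>Suc n. f (Suc n - k) k) = (\<Sum>k\<le>n. f (Suc (n - k)) k) + f 0 (Suc n)"
  by (auto simp: sum.atMost_Suc Suc_diff_le intro!: sum.cong)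

lemma sum_antidiagonal_Suc_Suc:
  fixes f :: "nat \<Rightarrow> nat \<Rightarrow> 'a::comm_monoid_add"
  shows "(\<Sum>k\<le>Suc (Suc n). f (Suc (Suc n) - k) k) =
    f (Suc (Suc n)) 0 + (\<Sum>k\<le>n. f (Suc (n - k)) (Suc k)) + f 0 (Suc (Suc n))"
  unfolding sum_antidiagonal_Suc_first sum_antidiagonal_Suc_last[of "\<lambda>a b. f a (Suc b)"]
  by (simp only: add.assoc)

text \<open>The weight w = 1 gives the sum of the theorem; w = q is needed to close the recurrence.\<close>

definition alt_diagonal_sum :: "'a::comm_ring_1 \<Rightarrow> 'a \<Rightarrow> nat \<Rightarrow> 'a" where
  "alt_diagonal_sum q w n = (\<Sum>k\<le>n. (- 1) ^ k * w ^ k * overpartition_gf q (n - k) k)"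

lemma alt_diagonal_sum_Suc_Suc:
  "alt_diagonal_sum q w (Suc (Suc n)) =
     alt_diagonal_sum q (w * q) (Suc n) - w * alt_diagonal_sum q w (Suc n) - w * q * alt_diagonal_sum q (w * q) n"
proof -
  let ?P = "overpartition_gf q"
  let ?f = "\<lambda>w a b. (- 1) ^ b * w ^ b * ?P a b"
  have "alt_diagonal_sum q w (Suc (Suc n)) =
     1 + (\<Sum>k\<le>n. ?f w (Suc (n - k)) (Suc k)) + (- 1) ^ Suc (Suc n) * w ^ Suc (Suc n)"
    unfolding alt_diagonal_sum_def sum_antidiagonal_Suc_Suc[of "?f w"] by simp
  also have "(\<Sum>k\<le>n. ?f w (Suc (n - k)) (Suc k)) =
     - w * (\<Sum>k\<le>n. ?f w (Suc (n - k)) k) + (\<Sum>k\<le>n. ?f (w * q) (n - k) (Suc k))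
     - w * q * (\<Sum>k\<le>n. ?f (w * q) (n - k) k)"
    by (simp add: overpartition_gf_Suc_Suc_conjugate sum.distrib sum_subtractf sum_negf
        sum_distrib_left power_mult_distrib algebra_simps)
  also have "(\<Sum>k\<le>n. ?f w (Suc (n - k)) k) = alt_diagonal_sum q w (Suc n) - (- 1) ^ Suc n * w ^ Suc n"
    unfolding alt_diagonal_sum_def sum_antidiagonal_Suc_last[of "?f w"] by simp
  also have "(\<Sum>k\<le>n. ?f (w * q) (n - k) (Suc k)) = alt_diagonal_sum q (w * q) (Suc n) - 1"
    unfolding alt_diagonal_sum_def sum_antidiagonal_Suc_first[of "?f (w * q)"] by simp
  finally show ?thesis
    by (simp add: alt_diagonal_sum_def algebra_simps)
qed

lemma alt_diagonal_sum_q_Suc_Suc: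
  "alt_diagonal_sum q q (Suc (Suc n)) =
     alt_diagonal_sum q q (Suc n) - q ^ Suc (Suc n) * (alt_diagonal_sum q 1 (Suc n) + alt_diagonal_sum q 1 n)"
proof -
  let ?P = "overpartition_gf q"
  let ?f = "\<lambda>w a b. (- 1) ^ b * w ^ b * ?P a b"
  have summand: "?f q (Suc (n - k)) (Suc k) = ?f q (n - k) (Suc k)
      - q ^ Suc (Suc n) * ?f 1 (Suc (n - k)) k - q ^ Suc (Suc n) * ?f 1 (n - k) k" if "k \<le> n" for k
  proof -
    have "Suc k + Suc (n - k) = Suc (Suc n)"
      using that by simp
    then have "q ^ Suc (Suc n) = q ^ Suc k * q ^ Suc (n - k)"
      by (metis power_add)
    then show ?thesis
      unfolding overpartition_gf_Suc_Suc by (simp only:) (simp add: algebra_simps)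
  qed
  have "alt_diagonal_sum q q (Suc (Suc n)) =
     1 + (\<Sum>k\<le>n. ?f q (Suc (n - k)) (Suc k)) + (- 1) ^ Suc (Suc n) * q ^ Suc (Suc n)"
    unfolding alt_diagonal_sum_def sum_antidiagonal_Suc_Suc[of "?f q"] by simp
  also have "(\<Sum>k\<le>n. ?f q (Suc (n - k)) (Suc k)) = (\<Sum>k\<le>n. ?f q (n - k) (Suc k))
     - q ^ Suc (Suc n) * (\<Sum>k\<le>n. ?f 1 (Suc (n - k)) k) - q ^ Suc (Suc n) * (\<Sum>k\<le>n. ?f 1 (n - k) k)"
    unfolding sum_subtractf[symmetric] sum_distrib_left by (rule sum.cong[OF refl summand]) simp
  also have "(\<Sum>k\<le>n. ?f 1 (Suc (n - k)) k) = alt_diagonal_sum q 1 (Suc n) - (- 1) ^ Suc n"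
    unfolding alt_diagonal_sum_def sum_antidiagonal_Suc_last[of "?f 1"] by simp
  also have "(\<Sum>k\<le>n. ?f q (n - k) (Suc k)) = alt_diagonal_sum q q (Suc n) - 1"
    unfolding alt_diagonal_sum_def sum_antidiagonal_Suc_first[of "?f q"] by simp
  finally show ?thesis
    by (simp add: alt_diagonal_sum_def algebra_simps)
qed

lemma alt_diagonal_sum_one_recurrence:
  fixes q :: "'a::comm_ring_1"
  defines "A \<equiv> alt_diagonal_sum q 1"
  shows "A (Suc (Suc (Suc (Suc n)))) =
    (1 - q ^ Suc (Suc (Suc n))) * A (Suc (Suc n)) + q ^ Suc (Suc (Suc n)) * A n"
proof -
  let ?B = "alt_diagonal_sum q q"
  have A_rec: "A (Suc (Suc m)) = ?B (Suc m) - A (Suc m) - q * ?B m" for m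
    using alt_diagonal_sum_Suc_Suc[of q 1 m] by (simp add: A_def)
  have B_rec: "?B (Suc (Suc m)) = ?B (Suc m) - q ^ Suc (Suc m) * (A (Suc m) + A m)" for m
    unfolding A_def by (rule alt_diagonal_sum_q_Suc_Suc)
  have "A (Suc (Suc (Suc (Suc n)))) =
      ?B (Suc (Suc (Suc n))) - A (Suc (Suc (Suc n))) - q * ?B (Suc (Suc n))"
    by (rule A_rec)
  also have "\<dots> = A (Suc (Suc n)) - q ^ Suc (Suc (Suc n)) * (A (Suc (Suc n)) + A (Suc n))
      + q * (?B (Suc n) - ?B (Suc (Suc n)))"
    unfolding B_rec[of "Suc n"] A_rec[of "Suc n"] by (simp add: algebra_simps)
  also have "\<dots> = (1 - q ^ Suc (Suc (Suc n))) * A (Suc (Suc n)) + q ^ Suc (Suc (Suc n)) * A n"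
    unfolding B_rec[of n] by (simp add: algebra_simps)
  finally show ?thesis .
qed

lemma alt_diagonal_sum_one_initial:
  "alt_diagonal_sum q 1 0 = 1" "alt_diagonal_sum q 1 1 = 0"
  "alt_diagonal_sum q 1 2 = 1 - 2 * q" "alt_diagonal_sum q 1 3 = 0"
  by (simp_all add: alt_diagonal_sum_def numeral_eq_Suc overpartition_gf_Suc_Suc algebra_simps)

lemma alt_diagonal_sum_one_odd: "alt_diagonal_sum q 1 (2 * m + 1) = 0"
proof (induction m rule: induct_nat_012)
  case (ge2 m)
  have "2 * Suc (Suc m) + 1 = Suc (Suc (Suc (Suc (2 * m + 1))))"
    by simp
  then show ?case
    using ge2 alt_diagonal_sum_one_recurrence[of q "2 * m + 1"] by simp
qed (use alt_diagonal_sum_one_initial in \<open>simp_all add: numeral_eq_Suc\<close>)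

lemma alt_diagonal_sum_one_even_step:
  "alt_diagonal_sum q 1 (2 * m + 2) - alt_diagonal_sum q 1 (2 * m) = 2 * (- 1) ^ Suc m * q ^ (Suc m)\<^sup>2"
proof (induction m)
  case 0
  show ?case
    using alt_diagonal_sum_one_initial[of q] by (simp add: numeral_eq_Suc)
next
  case (Suc m)
  have "2 * Suc m + 2 = Suc (Suc (Suc (Suc (2 * m))))" "2 * Suc m = Suc (Suc (2 * m))"
    by simp_all
  then have "alt_diagonal_sum q 1 (2 * Suc m + 2) - alt_diagonal_sum q 1 (2 * Suc m) =
      - (q ^ (2 * m + 3)) * (alt_diagonal_sum q 1 (2 * m + 2) - alt_diagonal_sum q 1 (2 * m))"
    using alt_diagonal_sum_one_recurrence[of q "2 * m"] by (simp add: algebra_simps numeral_eq_Suc)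
  also have "\<dots> = 2 * (- 1) ^ Suc (Suc m) * (q ^ (2 * m + 3) * q ^ (Suc m)\<^sup>2)"
    unfolding Suc.IH by (simp add: algebra_simps)
  also have "q ^ (2 * m + 3) * q ^ (Suc m)\<^sup>2 = q ^ (Suc (Suc m))\<^sup>2"
    unfolding power_add[symmetric] by (rule arg_cong[where f = "power q"]) (simp add: power2_eq_square)
  finally show ?case .
qed

lemma sum_symmetric_interval_Suc:
  "(\<Sum>j = - int (Suc m) .. int (Suc m). f j) = (\<Sum>j = - int m .. int m. f j) + f (- int (Suc m)) + f (int (Suc m))"
proof -
  have "{- int (Suc m) .. int (Suc m)} = insert (- int (Suc m)) (insert (int (Suc m)) {- int m .. int m})"
    by auto
  then show ?thesis by (simp add: algebra_simps)
qed

lemma alt_diagonal_sum_one_even: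
  "alt_diagonal_sum q 1 (2 * m) = (\<Sum>j = - int m .. int m. (- 1) ^ nat \<bar>j\<bar> * q ^ nat (j\<^sup>2))"
proof (induction m)
  case (Suc m)
  have "alt_diagonal_sum q 1 (2 * Suc m) = alt_diagonal_sum q 1 (2 * m) + 2 * (- 1) ^ Suc m * q ^ (Suc m)\<^sup>2"
    using alt_diagonal_sum_one_even_step[of q m] by (simp add: algebra_simps)
  moreover have "nat \<bar>- int (Suc m)\<bar> = Suc m" "nat \<bar>int (Suc m)\<bar> = Suc m"
    "nat ((- int (Suc m))\<^sup>2) = (Suc m)\<^sup>2" "nat ((int (Suc m))\<^sup>2) = (Suc m)\<^sup>2"
    by (simp_all only: power2_minus nat_power_eq) simp_all
  ultimately show ?case
    by (simp only: sum_symmetric_interval_Suc Suc.IH) (simp add: algebra_simps)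
qed (simp add: alt_diagonal_sum_one_initial)

theorem theorem1p3:
  fixes q :: "'a::comm_ring_1" and n :: nat
  shows "(\<Sum>k=0..n. (-1) ^ k * over_qbinom n k q) =
         (if odd n then 0
          else (\<Sum>j = - (int n div 2) .. int n div 2. (-1) ^ nat \<bar>j\<bar> * q ^ nat (j ^ 2)))"
proof -
  have "(\<Sum>k=0..n. (-1) ^ k * over_qbinom n k q) = alt_diagonal_sum q 1 n"
    by (simp add: alt_diagonal_sum_def over_qbinom_def overpartition_gf_def atLeast0AtMost)
  moreover have "alt_diagonal_sum q 1 n = 0" if "odd n"
    using that alt_diagonal_sum_one_odd by (metis oddE)
  moreover have "alt_diagonal_sum q 1 n =
      (\<Sum>j = - (int n div 2) .. int n div 2. (-1) ^ nat \<bar>j\<bar> * q ^ nat (j ^ 2))" if "even n"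
  proof -
    from that obtain m where "n = 2 * m" by (rule evenE)
    then show ?thesis using alt_diagonal_sum_one_even[of q m] by simp
  qed
  ultimately show ?thesis by simp
qed

end
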